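(* For every integer $t$, \begin{align*} \sum_{n=1}^\infty(-1)^{n-1}\binom{2n}{n}\frac{O_n}{8^n}L_{n+t}&=\frac{\sqrt2}{2\sqrt{\alpha+2}}\left(\bigl(\alpha^{t+1}-L_{t-1}\bigr)\ln\Bigl(\frac{\sqrt5}{2}\Bigr)+\bigl(\alpha^{t-2}+L_{t-1}\bigr)\ln\alpha\right),\\ \sum_{n=1}^\infty(-1)^{n-1}\binom{2n}{n}\frac{O_n}{8^n}F_{n+t}&=\frac{\sqrt{10}}{10\sqrt{\alpha+2}}\left(\bigl(\alpha^{t-2}+L_{t-1}\bigr)\ln\Bigl(\frac{\sqrt5}{2}\Bigr)+\bigl(\alpha^{t+1}-L_{t-1}\bigr)\ln\alpha\right), \end{align*} and, more generally, for every gibonacci sequence $G_j=G_j(a,b)$, \begin{align*} \sum_{n=1}^\infty(-1)^{n-1}\binom{2n}{n}\frac{O_n}{8^n}G_{n+t}&=\frac{\sqrt{10}}{10\sqrt{\alpha+2}}\Bigl(\bigl(\alpha^{t-3}(b\alpha+a)+G_t+G_{t-2}\bigr)\ln\Bigl(\frac{\sqrt5}{2}\Bigr)\\ &\qquad+\bigl(\alpha^t(b\alpha+a)-G_t-G_{t-2}\bigr)\ln\alpha\Bigr). \end{align*}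
   Context: $O_n=\sum_{j=1}^n\frac1{2j-1}$. $F_n$ and $L_n$ are the Fibonacci and Lucas numbers ($F_0=0,F_1=1$, $L_0=2,L_1=1$, $u_n=u_{n-1}+u_{n-2}$), extended to all integers by the recurrence. $\alpha=(1+\sqrt5)/2$, $\beta=-1/\alpha$. For numbers $a,b$ not both zero, the gibonacci sequence $G_j=G_j(a,b)$ is defined by $G_0=a$, $G_1=b$, $G_j=G_{j-1}+G_{j-2}$, extended to negative indices by $G_{-j}=G_{-(j-2)}-G_{-(j-1)}$; equivalently $G_j=\frac{(b-a\beta)\alpha^j+(a\alpha-b)\beta^j}{\alpha-\beta}$. *)

theory Defs
  imports Complex_Main
begin

fun gib_nat :: "real \<Rightarrow> real \<Rightarrow> nat \<Rightarrow> real" where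
  "gib_nat a b 0 = a"
| "gib_nat a b (Suc 0) = b"
| "gib_nat a b (Suc (Suc n)) = gib_nat a b (Suc n) + gib_nat a b n"

text \<open>gib_neg a b j = G_{-j}, via G_{-j} = G_{-(j-2)} - G_{-(j-1)}.\<close>
fun gib_neg :: "real \<Rightarrow> real \<Rightarrow> nat \<Rightarrow> real" where
  "gib_neg a b 0 = a"
| "gib_neg a b (Suc 0) = b - a"
| "gib_neg a b (Suc (Suc n)) = gib_neg a b n - gib_neg a b (Suc n)"

definition gib :: "real \<Rightarrow> real \<Rightarrow> int \<Rightarrow> real" where
  "gib a b t = (if t \<ge> 0 then gib_nat a b (nat t) else gib_neg a b (nat (- t)))"

definition fibZ :: "int \<Rightarrow> real" where "fibZ t = gib 0 1 t"
definition lucZ :: "int \<Rightarrow> real" where "lucZ t = gib 2 1 t"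

definition goldenA :: real where "goldenA = (1 + sqrt 5) / 2"

definition oddH :: "nat \<Rightarrow> real" where
  "oddH n = (\<Sum>j=1..n. 1 / (2 * real j - 1))"

definition cterm :: "nat \<Rightarrow> real" where
  "cterm n = (-1) ^ (n - 1) * real ((2 * n) choose n) * oddH n / 8 ^ n"

end

theory Submission
  imports Defs "HOL-Analysis.Generalised_Binomial_Theorem"
begin

(* By Binet's formula G_(n+t) = p alpha^(n+t) + q beta^(n+t), so it suffices to evaluate
   S(y) = sum_(n>=1) (-1)^(n-1) C(2n,n) O_n (y/8)^n at y = alpha and y = beta.
   The generating function F(x) = sum_n C(2n,n) O_n x^n is -ln(1-4x) / (2 sqrt(1-4x)): it is the
   Cauchy product of sum_n C(2n,n) x^n = (1-4x)^(-1/2) and sum_(n>=1) (4x)^n / (2n) = -ln(1-4x) / 2,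
   because C(2n,n) O_n and the convolution coefficient both satisfy
   (n+1) c_(n+1) = (4n+2) c_n + 2 C(2n,n) with c_0 = 0.
   Hence S(y) = -F(-y/8) = ln(1+y/2) / (2 sqrt(1+y/2)), and 1 + alpha/2 = alpha sqrt5/2,
   1 + beta/2 = sqrt5 / (2 alpha) produce the logarithms ln(sqrt5/2) +- ln alpha. *)

lemma central_binomial_Suc:
  "real (Suc k) * real ((2 * Suc k) choose Suc k) = (4 * real k + 2) * real ((2 * k) choose k)"
proof -
  have "real ((2 * Suc k) choose Suc k) = fact (Suc (Suc (2 * k))) / (fact (Suc k) * fact (Suc k))"
    by (simp add: binomial_fact del: binomial_Suc_Suc fact_Suc)
  also have "\<dots> = (4 * real k + 2) / real (Suc k) * (fact (2 * k) / (fact k * fact k))"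
    by (simp add: divide_simps) (simp add: algebra_simps)
  also have "fact (2 * k) / (fact k * fact k) = real ((2 * k) choose k)"
    by (simp add: binomial_fact)
  finally show ?thesis by (simp del: of_nat_Suc binomial_Suc_Suc)
qed

lemma central_binomial_gbinomial: "real ((2 * k) choose k) = ((-1/2 :: real) gchoose k) * (-4) ^ k"
proof (induction k)
  case (Suc k)
  have absorb: "real (Suc k) * ((-1/2 :: real) gchoose Suc k) = (-1/2 - real k) * ((-1/2) gchoose k)"
    using gbinomial_absorption[of k "-1/2 :: real"] gbinomial_absorb_comp[of "-1/2 :: real" k]
    by (simp only: diff_minus_eq_add)
  have "real (Suc k) * (((-1/2 :: real) gchoose Suc k) * (-4) ^ Suc k)
      = (-4) * (-4) ^ k * (real (Suc k) * ((-1/2 :: real) gchoose Suc k))"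
    by (simp only: power_Suc mult_ac)
  also have "\<dots> = (4 * real k + 2) * (((-1/2) gchoose k) * (-4) ^ k)"
    unfolding absorb by (simp add: algebra_simps)
  also have "\<dots> = real (Suc k) * real ((2 * Suc k) choose Suc k)"
    unfolding Suc.IH[symmetric] by (rule central_binomial_Suc[symmetric])
  finally show ?case
    by (metis mult_cancel_left of_nat_eq_0_iff nat.distinct(1))
qed simp

lemma central_binomial_series:
  assumes "\<bar>x\<bar> < 1/4"
  shows "(\<lambda>k. real ((2 * k) choose k) * x ^ k) sums (1 / sqrt (1 - 4 * x))"
proof -
  have "(\<lambda>k. ((-1/2 :: real) gchoose k) * (-4 * x) ^ k) sums (1 + -4 * x) powr (-1/2)"
    by (rule gen_binomial_real) (use assms in simp)
  moreover have "(1 + -4 * x) powr (-1/2) = 1 / sqrt (1 - 4 * x)"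
    using assms by (simp add: powr_minus_divide powr_half_sqrt)
  moreover have "((-1/2 :: real) gchoose k) * (-4 * x) ^ k = real ((2 * k) choose k) * x ^ k" for k
    by (simp only: central_binomial_gbinomial power_mult_distrib mult.assoc)
  ultimately show ?thesis by simp
qed

(* The k = 0 coefficient is 4^0 / 0 = 0, as required. *)
lemma ln_one_minus_4x_series:
  assumes "\<bar>x\<bar> < 1/4"
  shows "(\<lambda>k. 4 ^ k / (2 * real k) * x ^ k) sums (- ln (1 - 4 * x) / 2)"
proof -
  have "(\<lambda>k. - ((4 * x) ^ k) / real k) sums ln (1 + -4 * x)"
    using ln_series'[of "-4 * x"] assms by simp
  from sums_mult[OF this, of "-1/2"] show ?thesis
    by (simp add: field_simps)
qed

lemma summable_norm_if_coeff_le_4_pow: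
  fixes f :: "nat \<Rightarrow> real"
  assumes "\<And>k. \<bar>f k\<bar> \<le> 4 ^ k" and "\<bar>x\<bar> < 1/4"
  shows "summable (\<lambda>k. norm (f k * x ^ k))"
proof (rule summable_comparison_test')
  show "summable (\<lambda>k. \<bar>4 * x\<bar> ^ k)"
    by (rule summable_geometric) (use assms(2) in \<open>simp add: abs_mult\<close>)
  show "norm (norm (f k * x ^ k)) \<le> \<bar>4 * x\<bar> ^ k" for k
    using assms(1)[of k] by (simp add: abs_mult power_abs mult_right_mono)
qed

lemma oddH_Suc: "oddH (Suc n) = oddH n + 1 / (2 * real n + 1)"
  unfolding oddH_def by simp

lemma central_binomial_oddH_Suc:
  "real (Suc n) * (real ((2 * Suc n) choose Suc n) * oddH (Suc n))
     = (4 * real n + 2) * (real ((2 * n) choose n) * oddH n) + 2 * real ((2 * n) choose n)"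
  unfolding oddH_Suc mult.assoc[symmetric] central_binomial_Suc by (simp add: field_simps)

lemma log_coeff_convolution_Suc:
  fixes B :: "nat \<Rightarrow> real"
  assumes B_Suc: "\<And>k. real (Suc k) * B (Suc k) = (4 * real k + 2) * B k"
  shows "real (Suc n) * (\<Sum>i\<le>Suc n. 4 ^ i / (2 * real i) * B (Suc n - i))
     = (4 * real n + 2) * (\<Sum>i\<le>n. 4 ^ i / (2 * real i) * B (n - i)) + 2 * B n"
proof -
  define A :: "nat \<Rightarrow> real" where "A i = 4 ^ i / (2 * real i)" for i
  have iA: "real i * A i = (if i = 0 then 0 else 4 ^ i / 2)" for i
    by (simp add: A_def)
  have "real (Suc n) * (\<Sum>i\<le>Suc n. A i * B (Suc n - i))
      = (\<Sum>i\<le>Suc n. real i * A i * B (Suc n - i))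
        + (\<Sum>i\<le>Suc n. A i * (real (Suc n - i) * B (Suc n - i)))"
    unfolding sum_distrib_left sum.distrib[symmetric]
    by (rule sum.cong) (simp_all add: algebra_simps)
  also have "(\<Sum>i\<le>Suc n. real i * A i * B (Suc n - i)) = (\<Sum>i\<le>n. 2 * 4 ^ i * B (n - i))"
    unfolding sum.atMost_Suc_shift by (simp add: iA del: of_nat_Suc)
  also have "(\<Sum>i\<le>Suc n. A i * (real (Suc n - i) * B (Suc n - i)))
      = (\<Sum>i\<le>n. A i * (real (Suc (n - i)) * B (Suc (n - i))))"
    unfolding sum.atMost_Suc by (auto intro!: sum.cong simp: Suc_diff_le simp del: of_nat_Suc)
  also have "\<dots> = (\<Sum>i\<le>n. A i * ((4 * real (n - i) + 2) * B (n - i)))"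
    unfolding B_Suc ..
  also have "(\<Sum>i\<le>n. 2 * 4 ^ i * B (n - i)) + \<dots>
      = (\<Sum>i\<le>n. (4 * real n + 2) * (A i * B (n - i)) + (if i = 0 then 2 * B n else 0))"
    unfolding sum.distrib[symmetric]
    by (rule sum.cong) (auto simp: A_def of_nat_diff field_simps)
  finally show ?thesis
    by (simp add: A_def sum.distrib sum_distrib_left)
qed

lemma central_binomial_oddH_convolution:
  "real ((2 * n) choose n) * oddH n
     = (\<Sum>i\<le>n. 4 ^ i / (2 * real i) * real ((2 * (n - i)) choose (n - i)))"
proof (induction n)
  case (Suc n)
  have "real (Suc n) * (real ((2 * Suc n) choose Suc n) * oddH (Suc n))
      = real (Suc n) * (\<Sum>i\<le>Suc n. 4 ^ i / (2 * real i) * real ((2 * (Suc n - i)) choose (Suc n - i)))"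
    unfolding central_binomial_oddH_Suc Suc.IH
    by (rule log_coeff_convolution_Suc[symmetric]) (rule central_binomial_Suc)
  then show ?case by (simp del: of_nat_Suc binomial_Suc_Suc)
qed (simp add: oddH_def)

lemma central_binomial_oddH_series:
  assumes "\<bar>x\<bar> < 1/4"
  shows "(\<lambda>n. real ((2 * n) choose n) * oddH n * x ^ n) sums (- ln (1 - 4 * x) / (2 * sqrt (1 - 4 * x)))"
proof -
  define A :: "nat \<Rightarrow> real" where "A i = 4 ^ i / (2 * real i)" for i
  define B :: "nat \<Rightarrow> real" where "B k = real ((2 * k) choose k)" for k
  have "\<bar>A k\<bar> \<le> 4 ^ k" for k
    by (cases k) (simp_all add: A_def field_simps)
  then have A_summable: "summable (\<lambda>k. norm (A k * x ^ k))"
    using assms by (rule summable_norm_if_coeff_le_4_pow)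
  have "\<bar>B k\<bar> \<le> 4 ^ k" for k
    using binomial_le_pow2[of "2 * k" k] unfolding B_def power_mult
    by (simp flip: of_nat_le_iff)
  then have B_summable: "summable (\<lambda>k. norm (B k * x ^ k))"
    using assms by (rule summable_norm_if_coeff_le_4_pow)
  have "(\<lambda>n. \<Sum>i\<le>n. A i * x ^ i * (B (n - i) * x ^ (n - i))) sums ((\<Sum>k. A k * x ^ k) * (\<Sum>k. B k * x ^ k))"
    by (rule Cauchy_product_sums[OF A_summable B_summable])
  moreover have "(\<Sum>i\<le>n. A i * x ^ i * (B (n - i) * x ^ (n - i))) = real ((2 * n) choose n) * oddH n * x ^ n" for n
  proof -
    have "(\<Sum>i\<le>n. A i * x ^ i * (B (n - i) * x ^ (n - i))) = (\<Sum>i\<le>n. A i * B (n - i)) * x ^ n"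
      unfolding sum_distrib_right by (rule sum.cong) (auto simp: power_add[symmetric])
    then show ?thesis
      unfolding central_binomial_oddH_convolution A_def B_def .
  qed
  moreover have "(\<Sum>k. A k * x ^ k) * (\<Sum>k. B k * x ^ k) = - ln (1 - 4 * x) / (2 * sqrt (1 - 4 * x))"
    using ln_one_minus_4x_series[OF assms] central_binomial_series[OF assms]
    unfolding A_def B_def by (simp add: sums_iff)
  ultimately show ?thesis by simp
qed

lemma cterm_power_series:
  assumes "\<bar>y\<bar> < 2"
  shows "(\<lambda>m. cterm (Suc m) * y ^ Suc m) sums (ln (1 + y/2) / (2 * sqrt (1 + y/2)))"
proof -
  define c :: "nat \<Rightarrow> real" where "c n = real ((2 * n) choose n) * oddH n" for n
  have "\<bar>-y/8\<bar> < 1/4"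
    using assms by simp
  from central_binomial_oddH_series[OF this]
  have "(\<lambda>n. c n * (-y/8) ^ n) sums (- (ln (1 + y/2) / (2 * sqrt (1 + y/2))))"
    by (simp add: c_def)
  then have "(\<lambda>m. c (Suc m) * (-y/8) ^ Suc m) sums (- (ln (1 + y/2) / (2 * sqrt (1 + y/2))))"
    by (subst sums_Suc_iff) (simp add: c_def oddH_def)
  from sums_minus[OF this] show ?thesis
    by (simp add: cterm_def c_def power_minus' field_simps)
qed

definition goldenB :: real where "goldenB = (1 - sqrt 5) / 2"

lemma goldenA_plus_goldenB: "goldenA + goldenB = 1"
  by (simp add: goldenA_def goldenB_def field_simps)

lemma goldenA_minus_goldenB: "goldenA - goldenB = sqrt 5"
  by (simp add: goldenA_def goldenB_def field_simps)

lemma goldenA_times_goldenB: "goldenA * goldenB = -1"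
  by (simp add: goldenA_def goldenB_def field_simps)

lemma goldenA_square: "goldenA ^ 2 = goldenA + 1"
  using goldenA_plus_goldenB goldenA_times_goldenB by algebra

lemma goldenB_square: "goldenB ^ 2 = goldenB + 1"
  using goldenA_plus_goldenB goldenA_times_goldenB by algebra

lemma goldenA_gt_1: "1 < goldenA"
  by (simp add: goldenA_def)

lemma goldenA_less_2: "goldenA < 2"
proof -
  have "sqrt 5 < (3 :: real)"
    by (rule real_less_lsqrt) auto
  then show ?thesis by (simp add: goldenA_def)
qed

lemma goldenB_bounds: "-1 < goldenB" "goldenB < 0"
  using goldenA_plus_goldenB goldenA_gt_1 goldenA_less_2 by auto

lemma power_Suc_Suc_if_square_eq:
  fixes w :: "'a :: comm_ring_1"
  assumes "w ^ 2 = c + d * w"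
  shows "w ^ Suc (Suc n) = c * w ^ n + d * w ^ Suc n"
proof -
  have "w ^ Suc (Suc n) = w ^ 2 * w ^ n"
    by (simp add: power2_eq_square)
  then show ?thesis
    using assms by (simp add: algebra_simps)
qed

lemma gib_nat_eq_roots_combination:
  fixes x y :: real
  assumes "x ^ 2 = x + 1" "y ^ 2 = y + 1" "p + q = a" "p * x + q * y = b"
  shows "gib_nat a b n = p * x ^ n + q * y ^ n"
proof (induction n rule: induct_nat_012)
  case (ge2 n)
  have "z ^ Suc (Suc n) = z ^ n + z ^ Suc n" if "z ^ 2 = z + 1" for z :: real
    using power_Suc_Suc_if_square_eq[of z 1 1] that by simp
  with ge2 assms(1,2) show ?case
    by (simp add: algebra_simps)
qed (use assms in simp_all)

lemma gib_neg_eq_roots_combination: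
  fixes x y :: real
  assumes "x ^ 2 = x + 1" "y ^ 2 = y + 1" "p + q = a" "p * x + q * y = b"
  shows "gib_neg a b n = p * (x - 1) ^ n + q * (y - 1) ^ n"
proof (induction n rule: induct_nat_012)
  case (ge2 n)
  have "(z - 1) ^ Suc (Suc n) = (z - 1) ^ n - (z - 1) ^ Suc n" if "z ^ 2 = z + 1" for z :: real
    using power_Suc_Suc_if_square_eq[of "z - 1" 1 "-1"] that
    by (simp add: power2_eq_square algebra_simps)
  with ge2 assms(1,2) show ?case
    by (simp add: algebra_simps)
qed (use assms in \<open>simp_all add: algebra_simps\<close>)

lemma gib_eq_roots_combination:
  fixes x y :: real
  assumes "x ^ 2 = x + 1" "y ^ 2 = y + 1" "p + q = a" "p * x + q * y = b"
  shows "gib a b t = p * x powi t + q * y powi t"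
proof (cases "t \<ge> 0")
  case True
  then show ?thesis
    using gib_nat_eq_roots_combination[OF assms] by (simp add: gib_def power_int_def)
next
  case False
  have "inverse z = z - 1" if "z ^ 2 = z + 1" for z :: real
    using that by (intro inverse_unique) (simp add: power2_eq_square algebra_simps)
  with False show ?thesis
    using gib_neg_eq_roots_combination[OF assms] assms(1,2) by (simp add: gib_def power_int_def)
qed

lemma gib_binet:
  "gib a b t = ((b - a * goldenB) * goldenA powi t + (a * goldenA - b) * goldenB powi t) / sqrt 5"
proof -
  have "gib a b t = (b - a * goldenB) / sqrt 5 * goldenA powi t + (a * goldenA - b) / sqrt 5 * goldenB powi t"
  proof (rule gib_eq_roots_combination[OF goldenA_square goldenB_square])
    have "(b - a * goldenB) + (a * goldenA - b) = a * sqrt 5"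
      unfolding goldenA_minus_goldenB[symmetric] by algebra
    then show "(b - a * goldenB) / sqrt 5 + (a * goldenA - b) / sqrt 5 = a"
      by (simp add: field_simps)
    have "(b - a * goldenB) * goldenA + (a * goldenA - b) * goldenB = b * sqrt 5"
      unfolding goldenA_minus_goldenB[symmetric] by algebra
    then show "(b - a * goldenB) / sqrt 5 * goldenA + (a * goldenA - b) / sqrt 5 * goldenB = b"
      by (simp add: field_simps)
  qed
  then show ?thesis
    by (simp add: add_divide_distrib)
qed

lemma lucZ_binet: "lucZ t = goldenA powi t + goldenB powi t"
  unfolding lucZ_def
  using gib_eq_roots_combination[OF goldenA_square goldenB_square, of 1 1] goldenA_plus_goldenB by simp

lemma fibZ_binet: "fibZ t = (goldenA powi t - goldenB powi t) / sqrt 5"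
proof -
  have "gib 0 1 t = 1 / sqrt 5 * goldenA powi t + (- 1 / sqrt 5) * goldenB powi t"
    by (rule gib_eq_roots_combination[OF goldenA_square goldenB_square])
      (simp_all add: diff_divide_distrib[symmetric] goldenA_minus_goldenB)
  then show ?thesis
    unfolding fibZ_def by (simp add: diff_divide_distrib)
qed

lemma power_int_diff_nat_by_inverse:
  fixes x y :: "'a :: field"
  assumes "x * y = 1"
  shows "x powi (t - int k) = x powi t * y ^ k"
proof -
  have "x \<noteq> 0" and "y = inverse x"
    using assms by (auto simp: inverse_unique)
  then show ?thesis
    by (simp add: power_int_diff power_inverse divide_inverse)
qed

lemma cterm_power_series_value_goldenA:
  "ln (1 + goldenA / 2) / (2 * sqrt (1 + goldenA / 2))
     = sqrt 2 / (2 * sqrt (goldenA + 2)) * (ln (sqrt 5 / 2) + ln goldenA)"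
proof -
  have "sqrt 5 * goldenA = goldenA + 2"
    unfolding goldenA_minus_goldenB[symmetric] using goldenA_square goldenA_times_goldenB by algebra
  then have "1 + goldenA / 2 = sqrt 5 / 2 * goldenA"
    by simp
  then have "ln (1 + goldenA / 2) = ln (sqrt 5 / 2) + ln goldenA"
    using goldenA_gt_1 by (simp only: ln_mult) simp
  moreover have "sqrt (1 + goldenA / 2) = sqrt (goldenA + 2) / sqrt 2"
    by (simp add: real_sqrt_divide[symmetric] add_divide_distrib)
  ultimately show ?thesis
    by simp
qed

lemma cterm_power_series_value_goldenB:
  "ln (1 + goldenB / 2) / (2 * sqrt (1 + goldenB / 2))
     = sqrt 2 / (2 * sqrt (goldenA + 2)) * goldenA * (ln (sqrt 5 / 2) - ln goldenA)"
proof -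
  have "sqrt 5 = goldenA * (goldenB + 2)"
    unfolding goldenA_minus_goldenB[symmetric] using goldenA_times_goldenB goldenA_plus_goldenB
    by algebra
  then have "1 + goldenB / 2 = sqrt 5 / 2 / goldenA"
    using goldenA_gt_1 by (simp add: field_simps)
  then have ln_eq: "ln (1 + goldenB / 2) = ln (sqrt 5 / 2) - ln goldenA"
    using goldenA_gt_1 by (simp only: ln_div) simp
  have "goldenA ^ 2 * (goldenB + 2) = goldenA + 2"
    using goldenA_times_goldenB goldenA_plus_goldenB by algebra
  then have "1 + goldenB / 2 = (goldenA + 2) / (2 * goldenA ^ 2)"
    using goldenA_gt_1 by (simp add: field_simps)
  then have sqrt_eq: "sqrt (1 + goldenB / 2) = sqrt (goldenA + 2) / (sqrt 2 * goldenA)"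
    using goldenA_gt_1 by (simp add: real_sqrt_divide real_sqrt_mult)
  show ?thesis
    unfolding ln_eq sqrt_eq using goldenA_gt_1 by (simp add: field_simps)
qed

lemma binet_cterm_series:
  "(\<lambda>m. cterm (Suc m) * (p * goldenA powi (int (Suc m) + t) + q * goldenB powi (int (Suc m) + t)))
     sums (sqrt 2 / (2 * sqrt (goldenA + 2)) *
       ((p * goldenA powi t + goldenA * q * goldenB powi t) * ln (sqrt 5 / 2)
        + (p * goldenA powi t - goldenA * q * goldenB powi t) * ln goldenA))"
proof -
  define K where "K = sqrt 2 / (2 * sqrt (goldenA + 2))"
  let ?P = "p * goldenA powi t" and ?Q = "q * goldenB powi t"
  have "\<bar>goldenA\<bar> < 2" "\<bar>goldenB\<bar> < 2"
    using goldenA_gt_1 goldenA_less_2 goldenB_bounds by auto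
  from sums_add[OF sums_mult[OF cterm_power_series[OF this(1)], of ?P]
                   sums_mult[OF cterm_power_series[OF this(2)], of ?Q]]
  have series: "(\<lambda>m. ?P * (cterm (Suc m) * goldenA ^ Suc m) + ?Q * (cterm (Suc m) * goldenB ^ Suc m))
     sums (?P * (K * (ln (sqrt 5 / 2) + ln goldenA)) + ?Q * (K * goldenA * (ln (sqrt 5 / 2) - ln goldenA)))"
    unfolding cterm_power_series_value_goldenA cterm_power_series_value_goldenB K_def .
  have "z powi (int (Suc m) + t) = z ^ Suc m * z powi t" if "z \<noteq> 0" for z :: real and m
    using that by (simp add: power_int_add)
  then have terms: "(\<lambda>m. ?P * (cterm (Suc m) * goldenA ^ Suc m) + ?Q * (cterm (Suc m) * goldenB ^ Suc m))
      = (\<lambda>m. cterm (Suc m) * (p * goldenA powi (int (Suc m) + t) + q * goldenB powi (int (Suc m) + t)))"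
    using goldenA_gt_1 goldenB_bounds by (simp add: algebra_simps)
  have sum_value: "?P * (K * (ln (sqrt 5 / 2) + ln goldenA)) + ?Q * (K * goldenA * (ln (sqrt 5 / 2) - ln goldenA))
     = K * ((p * goldenA powi t + goldenA * q * goldenB powi t) * ln (sqrt 5 / 2)
            + (p * goldenA powi t - goldenA * q * goldenB powi t) * ln goldenA)"
    by (simp add: algebra_simps)
  show ?thesis
    using series unfolding terms sum_value unfolding K_def .
qed

lemma goldenA_powi_diff: "goldenA powi (t - int k) = goldenA powi t * (- goldenB) ^ k"
  by (rule power_int_diff_nat_by_inverse) (simp add: goldenA_times_goldenB)

lemma goldenB_powi_diff: "goldenB powi (t - int k) = goldenB powi t * (- goldenA) ^ k"
  by (rule power_int_diff_nat_by_inverse) (simp add: goldenA_times_goldenB mult.commute)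

lemma lucZ_pred: "lucZ (t - 1) = - goldenB * goldenA powi t - goldenA * goldenB powi t"
  using goldenA_powi_diff[of t 1] goldenB_powi_diff[of t 1] by (simp add: lucZ_binet)

lemma goldenA_powi_Suc_minus_lucZ_pred:
  "goldenA powi (t + 1) - lucZ (t - 1) = goldenA powi t + goldenA * goldenB powi t"
proof -
  have "goldenA powi (t + 1) = goldenA * goldenA powi t"
    using goldenA_gt_1 by (simp add: power_int_add)
  then show ?thesis
    unfolding lucZ_pred using goldenA_plus_goldenB by algebra
qed

lemma goldenA_powi_diff2_plus_lucZ_pred:
  "goldenA powi (t - 2) + lucZ (t - 1) = goldenA powi t - goldenA * goldenB powi t"
  unfolding lucZ_pred using goldenA_powi_diff[of t 2] goldenB_square by (simp add: algebra_simps)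

lemma sqrt5_gib_shift:
  "sqrt 5 * gib a b (t - int k)
     = (b - a * goldenB) * goldenA powi t * (- goldenB) ^ k + (a * goldenA - b) * goldenB powi t * (- goldenA) ^ k"
  unfolding gib_binet goldenA_powi_diff goldenB_powi_diff by simp

lemma goldenA_powi_plus_gib_eq:
  "goldenA powi (t - 3) * (b * goldenA + a) + gib a b t + gib a b (t - 2)
     = (b - a * goldenB) * goldenA powi t + goldenA * (a * goldenA - b) * goldenB powi t"
proof -
  have "sqrt 5 * (goldenA powi (t - 3) * (b * goldenA + a) + gib a b t + gib a b (t - 2))
      = sqrt 5 * ((b - a * goldenB) * goldenA powi t + goldenA * (a * goldenA - b) * goldenB powi t)"
    using sqrt5_gib_shift[of a b t 0] sqrt5_gib_shift[of a b t 2] goldenA_powi_diff[of t 3]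
      goldenA_minus_goldenB goldenA_plus_goldenB goldenA_times_goldenB
    by simp algebra
  then show ?thesis by simp
qed

lemma goldenA_powi_minus_gib_eq:
  "goldenA powi t * (b * goldenA + a) - gib a b t - gib a b (t - 2)
     = (b - a * goldenB) * goldenA powi t - goldenA * (a * goldenA - b) * goldenB powi t"
proof -
  have "sqrt 5 * (goldenA powi t * (b * goldenA + a) - gib a b t - gib a b (t - 2))
      = sqrt 5 * ((b - a * goldenB) * goldenA powi t - goldenA * (a * goldenA - b) * goldenB powi t)"
    using sqrt5_gib_shift[of a b t 0] sqrt5_gib_shift[of a b t 2]
      goldenA_minus_goldenB goldenA_plus_goldenB goldenA_times_goldenB
    by simp algebra
  then show ?thesis by simp
qed

lemma sqrt10_divide: "sqrt 10 / (10 * x) = sqrt 2 / (2 * x) / sqrt 5"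
proof -
  have "sqrt 10 = sqrt 2 * sqrt 5"
    by (simp flip: real_sqrt_mult)
  moreover have "10 * x = sqrt 5 * (sqrt 5 * (2 * x))"
    by simp
  ultimately show ?thesis
    by (simp only:) simp
qed

lemma lucZ_cterm_series:
  "(\<lambda>m. cterm (Suc m) * lucZ (int (Suc m) + t)) sums
     (sqrt 2 / (2 * sqrt (goldenA + 2)) *
       ((goldenA powi (t + 1) - lucZ (t - 1)) * ln (sqrt 5 / 2)
        + (goldenA powi (t - 2) + lucZ (t - 1)) * ln goldenA))"
  using binet_cterm_series[of 1 t 1]
  unfolding goldenA_powi_Suc_minus_lucZ_pred goldenA_powi_diff2_plus_lucZ_pred
  by (simp add: lucZ_binet)

lemma fibZ_cterm_series:
  "(\<lambda>m. cterm (Suc m) * fibZ (int (Suc m) + t)) sums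
     (sqrt 10 / (10 * sqrt (goldenA + 2)) *
       ((goldenA powi (t - 2) + lucZ (t - 1)) * ln (sqrt 5 / 2)
        + (goldenA powi (t + 1) - lucZ (t - 1)) * ln goldenA))"
  using sums_divide[OF binet_cterm_series[of 1 t "-1"], of "sqrt 5"]
  unfolding goldenA_powi_Suc_minus_lucZ_pred goldenA_powi_diff2_plus_lucZ_pred sqrt10_divide
  by (simp add: fibZ_binet)

lemma gib_cterm_series:
  "(\<lambda>m. cterm (Suc m) * gib a b (int (Suc m) + t)) sums
     (sqrt 10 / (10 * sqrt (goldenA + 2)) *
       ((goldenA powi (t - 3) * (b * goldenA + a) + gib a b t + gib a b (t - 2)) * ln (sqrt 5 / 2)
        + (goldenA powi t * (b * goldenA + a) - gib a b t - gib a b (t - 2)) * ln goldenA))"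
  using sums_divide[OF binet_cterm_series[of "b - a * goldenB" t "a * goldenA - b"], of "sqrt 5"]
  unfolding goldenA_powi_plus_gib_eq goldenA_powi_minus_gib_eq sqrt10_divide
  by (simp add: gib_binet)

theorem theorem13:
  shows "(\<forall>t::int. (\<lambda>m. cterm (Suc m) * lucZ (int (Suc m) + t)) sums
            (sqrt 2 / (2 * sqrt (goldenA + 2)) *
              ((goldenA powi (t + 1) - lucZ (t - 1)) * ln (sqrt 5 / 2)
               + (goldenA powi (t - 2) + lucZ (t - 1)) * ln goldenA)))
    \<and> (\<forall>t::int. (\<lambda>m. cterm (Suc m) * fibZ (int (Suc m) + t)) sums
            (sqrt 10 / (10 * sqrt (goldenA + 2)) *
              ((goldenA powi (t - 2) + lucZ (t - 1)) * ln (sqrt 5 / 2)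
               + (goldenA powi (t + 1) - lucZ (t - 1)) * ln goldenA)))
    \<and> (\<forall>(a::real) (b::real) (t::int). (a \<noteq> 0 \<or> b \<noteq> 0) \<longrightarrow>
          (\<lambda>m. cterm (Suc m) * gib a b (int (Suc m) + t)) sums
            (sqrt 10 / (10 * sqrt (goldenA + 2)) *
              ((goldenA powi (t - 3) * (b * goldenA + a) + gib a b t + gib a b (t - 2)) * ln (sqrt 5 / 2)
               + (goldenA powi t * (b * goldenA + a) - gib a b t - gib a b (t - 2)) * ln goldenA)))"
  using lucZ_cterm_series fibZ_cterm_series gib_cterm_series by blast

end
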